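(* Let $e_1,e_2,e_3$ be nonzero integers with $e_1+e_2+e_3=0$, let $n$ be a positive integer, and let $\Lambda=(d_1,d_2,d_3)$ be a triple of nonzero square-free integers with $d_1d_2d_3$ a square. Then $D^{(n)}_\Lambda(\mathbb{R})\neq\emptyset$ if and only if all of the following hold: $d_1>0$ if $e_2>0,e_3<0$; $d_2>0$ if $e_3>0,e_1<0$; $d_3>0$ if $e_1>0,e_2<0$.
   Context: $D^{(n)}_\Lambda$ is the curve in $\mathbb{P}^3$ with coordinates $(t,u_1,u_2,u_3)$ defined by the three equations $e_1nt^2+d_2u_2^2-d_3u_3^2=0$, $e_2nt^2+d_3u_3^2-d_1u_1^2=0$, $e_3nt^2+d_1u_1^2-d_2u_2^2=0$ (the 2-covering of $y^2=x(x-e_1n)(x+e_2n)$ attached to $\Lambda$). *)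

theory Defs
  imports Complex_Main "HOL-Computational_Algebra.Squarefree"
begin

text \<open>A real point is represented by a nonzero real vector (t,u1,u2,u3) satisfying
  the three homogeneous equations (projective points = nonzero solutions up to scaling).\<close>

definition D_eqs :: "int \<Rightarrow> int \<Rightarrow> int \<Rightarrow> int \<Rightarrow> int \<Rightarrow> int \<Rightarrow> int \<Rightarrow>
    real \<Rightarrow> real \<Rightarrow> real \<Rightarrow> real \<Rightarrow> bool" where
  "D_eqs e1 e2 e3 n d1 d2 d3 t u1 u2 u3 \<longleftrightarrow>
     real_of_int e1 * real_of_int n * t^2 + real_of_int d2 * u2^2 - real_of_int d3 * u3^2 = 0 \<and>
     real_of_int e2 * real_of_int n * t^2 + real_of_int d3 * u3^2 - real_of_int d1 * u1^2 = 0 \<and>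
     real_of_int e3 * real_of_int n * t^2 + real_of_int d1 * u1^2 - real_of_int d2 * u2^2 = 0"

definition D_real_points :: "int \<Rightarrow> int \<Rightarrow> int \<Rightarrow> int \<Rightarrow> int \<Rightarrow> int \<Rightarrow> int \<Rightarrow>
    (real \<times> real \<times> real \<times> real) set" where
  "D_real_points e1 e2 e3 n d1 d2 d3 =
     {(t, u1, u2, u3). (t, u1, u2, u3) \<noteq> (0, 0, 0, 0) \<and> D_eqs e1 e2 e3 n d1 d2 d3 t u1 u2 u3}"

end

theory Submission
  imports Defs
begin

text \<open>Put \<open>s = n t\<^sup>2 \<ge> 0\<close> and \<open>X\<^sub>i = d\<^sub>i u\<^sub>i\<^sup>2\<close>; the equations say
  \<open>X\<^sub>2 = X\<^sub>1 + e\<^sub>3 s\<close> and \<open>X\<^sub>3 = X\<^sub>1 - e\<^sub>2 s\<close>, and they are invariant under cyclic rotation of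
  the indices. If \<open>e\<^sub>2 > 0 > e\<^sub>3\<close> then \<open>X\<^sub>1\<close> is the largest of the \<open>X\<^sub>i\<close>. Were \<open>d\<^sub>1 < 0\<close>, all
  \<open>X\<^sub>i\<close> would be \<open>\<le> 0\<close>; as \<open>d\<^sub>1 d\<^sub>2 d\<^sub>3\<close> is a nonzero square, one of \<open>d\<^sub>2, d\<^sub>3\<close> is positive,
  so the corresponding \<open>X\<^sub>i\<close> vanishes together with \<open>X\<^sub>1\<close>, which forces \<open>s = 0\<close> and then the
  whole point to vanish. Conversely, take \<open>t = 1\<close> and prescribe \<open>X\<^sub>1\<close>: large if all \<open>d\<^sub>i > 0\<close>,
  zero if \<open>d\<^sub>1\<close> is the only positive one; the \<open>u\<^sub>i\<close> are then square roots.\<close>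

lemma D_eqs_rotate:
  "D_eqs e1 e2 e3 n d1 d2 d3 t u1 u2 u3 \<longleftrightarrow> D_eqs e2 e3 e1 n d2 d3 d1 t u2 u3 u1"
  unfolding D_eqs_def by auto

lemma D_real_points_rotate_iff:
  "(t, u1, u2, u3) \<in> D_real_points e1 e2 e3 n d1 d2 d3 \<longleftrightarrow>
   (t, u2, u3, u1) \<in> D_real_points e2 e3 e1 n d2 d3 d1"
  unfolding D_real_points_def using D_eqs_rotate[of e1 e2 e3 n d1 d2 d3 t u1 u2 u3] by auto

lemma D_real_points_nonempty_rotate:
  "D_real_points e1 e2 e3 n d1 d2 d3 \<noteq> {} \<longleftrightarrow> D_real_points e2 e3 e1 n d2 d3 d1 \<noteq> {}"
  by (metis D_real_points_rotate_iff ex_in_conv prod_cases4)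

lemma D_real_points_nonempty_imp_d1_pos:
  fixes e1 e2 e3 n d1 d2 d3 :: int
  assumes "e2 > 0" "e3 < 0" "n > 0" "d1 * d2 * d3 > 0"
    and "D_real_points e1 e2 e3 n d1 d2 d3 \<noteq> {}"
  shows "d1 > 0"
proof (rule ccontr)
  assume "\<not> d1 > 0"
  have "d1 \<noteq> 0" "d2 \<noteq> 0" "d3 \<noteq> 0" using assms(4) by auto
  with \<open>\<not> d1 > 0\<close> have "d1 < 0" by simp
  with assms(4) have "d2 > 0 \<or> d3 > 0"
    by (auto simp: zero_less_mult_iff mult_less_0_iff)
  obtain t u1 u2 u3 where nonzero: "(t, u1, u2, u3) \<noteq> (0, 0, 0, 0)"
    and eqs: "D_eqs e1 e2 e3 n d1 d2 d3 t u1 u2 u3"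
    using assms(5) unfolding D_real_points_def by auto
  define s where "s = real_of_int n * t\<^sup>2"
  define X1 where "X1 = real_of_int d1 * u1\<^sup>2"
  define X2 where "X2 = real_of_int d2 * u2\<^sup>2"
  define X3 where "X3 = real_of_int d3 * u3\<^sup>2"
  have "s \<ge> 0" using assms(3) unfolding s_def by simp
  have X2: "X2 = X1 + e3 * s" and X3: "X3 = X1 - e2 * s"
    using eqs unfolding D_eqs_def X1_def X2_def X3_def s_def by (auto simp: algebra_simps)
  have "X1 \<le> 0" unfolding X1_def using \<open>d1 < 0\<close> by (simp add: mult_nonpos_nonneg)
  moreover have "X2 \<ge> 0 \<or> X3 \<ge> 0"
    using \<open>d2 > 0 \<or> d3 > 0\<close> unfolding X2_def X3_def by auto
  ultimately have "e3 * s \<ge> 0 \<or> e2 * s \<le> 0"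
    using X2 X3 by linarith
  with assms(1,2) \<open>s \<ge> 0\<close> have "s = 0"
    by (auto simp: mult_le_0_iff zero_le_mult_iff)
  then have "X1 = 0" "X2 = 0" "X3 = 0"
    using X2 X3 \<open>X1 \<le> 0\<close> \<open>X2 \<ge> 0 \<or> X3 \<ge> 0\<close> by auto
  with \<open>s = 0\<close> \<open>d1 \<noteq> 0\<close> \<open>d2 \<noteq> 0\<close> \<open>d3 \<noteq> 0\<close> have "t = 0" "u1 = 0" "u2 = 0" "u3 = 0"
    using assms(3) unfolding s_def X1_def X2_def X3_def by auto
  with nonzero show False by simp
qed

lemma sign_conditions_if_D_real_points_nonempty:
  fixes e1 e2 e3 n d1 d2 d3 :: int
  assumes "n > 0" "d1 * d2 * d3 > 0" "D_real_points e1 e2 e3 n d1 d2 d3 \<noteq> {}"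
  shows "(e2 > 0 \<and> e3 < 0 \<longrightarrow> d1 > 0) \<and> (e3 > 0 \<and> e1 < 0 \<longrightarrow> d2 > 0) \<and>
         (e1 > 0 \<and> e2 < 0 \<longrightarrow> d3 > 0)"
proof -
  have "d2 * d3 * d1 > 0" "d3 * d1 * d2 > 0" using assms(2) by (simp_all only: mult_ac)
  moreover have "D_real_points e2 e3 e1 n d2 d3 d1 \<noteq> {}" "D_real_points e3 e1 e2 n d3 d1 d2 \<noteq> {}"
    using assms(3) D_real_points_nonempty_rotate by blast+
  ultimately show ?thesis
    using assms D_real_points_nonempty_imp_d1_pos by blast
qed

lemma D_real_points_memI:
  fixes e1 e2 e3 n d1 d2 d3 :: int and a :: real
  assumes "e1 + e2 + e3 = 0" "d1 \<noteq> 0" "d2 \<noteq> 0" "d3 \<noteq> 0"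
    and "a / d1 \<ge> 0" "(a + e3 * n) / d2 \<ge> 0" "(a - e2 * n) / d3 \<ge> 0"
  shows "(1, sqrt (a / d1), sqrt ((a + e3 * n) / d2), sqrt ((a - e2 * n) / d3))
           \<in> D_real_points e1 e2 e3 n d1 d2 d3" (is "(1, ?u1, ?u2, ?u3) \<in> _")
proof -
  have e1: "real_of_int e1 = - e2 - e3"
    using assms(1) by linarith
  have "d1 * ?u1\<^sup>2 = a" "d2 * ?u2\<^sup>2 = a + e3 * n" "d3 * ?u3\<^sup>2 = a - e2 * n"
    using assms(2-7) by simp_all
  then show ?thesis
    unfolding D_real_points_def D_eqs_def e1 by (simp add: algebra_simps)
qed

lemma D_real_points_nonempty_if_all_pos:
  fixes e1 e2 e3 n d1 d2 d3 :: int
  assumes "e1 + e2 + e3 = 0" "d1 > 0" "d2 > 0" "d3 > 0"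
  shows "D_real_points e1 e2 e3 n d1 d2 d3 \<noteq> {}"
proof -
  define a where "a = \<bar>real_of_int (e2 * n)\<bar> + \<bar>real_of_int (e3 * n)\<bar>"
  have "a \<ge> 0" "a + real_of_int (e3 * n) \<ge> 0" "a - real_of_int (e2 * n) \<ge> 0"
    unfolding a_def by arith+
  with assms(2-4) have "a / d1 \<ge> 0" "(a + e3 * n) / d2 \<ge> 0" "(a - e2 * n) / d3 \<ge> 0"
    by simp_all
  from D_real_points_memI[OF assms(1) _ _ _ this] assms(2-4) show ?thesis
    by blast
qed

lemma D_real_points_nonempty_if_only_d1_pos:
  fixes e1 e2 e3 n d1 d2 d3 :: int
  assumes "e1 \<noteq> 0" "e2 \<noteq> 0" "e3 \<noteq> 0" "e1 + e2 + e3 = 0" "n > 0"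
    and "d1 > 0" "d2 < 0" "d3 < 0"
    and "e3 > 0 \<and> e1 < 0 \<longrightarrow> d2 > 0" "e1 > 0 \<and> e2 < 0 \<longrightarrow> d3 > 0"
  shows "D_real_points e1 e2 e3 n d1 d2 d3 \<noteq> {}"
proof -
  have "e2 > 0" "e3 < 0" using assms by linarith+
  with assms(5) have "real_of_int e3 * n < 0" "real_of_int e2 * n > 0"
    by (simp_all add: mult_neg_pos)
  with assms(6-8)
  have "(0::real) / d1 \<ge> 0" "((0::real) + e3 * n) / d2 \<ge> 0" "((0::real) - e2 * n) / d3 \<ge> 0"
    by (simp_all add: divide_nonpos_neg divide_pos_neg less_imp_le)
  from D_real_points_memI[OF assms(4) _ _ _ this] assms(6-8) show ?thesis
    by blast
qed

lemma D_real_points_nonempty_if_sign_conditions: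
  fixes e1 e2 e3 n d1 d2 d3 :: int
  assumes "e1 \<noteq> 0" "e2 \<noteq> 0" "e3 \<noteq> 0" "e1 + e2 + e3 = 0" "n > 0" "d1 * d2 * d3 > 0"
    and "(e2 > 0 \<and> e3 < 0 \<longrightarrow> d1 > 0) \<and> (e3 > 0 \<and> e1 < 0 \<longrightarrow> d2 > 0) \<and>
         (e1 > 0 \<and> e2 < 0 \<longrightarrow> d3 > 0)"
  shows "D_real_points e1 e2 e3 n d1 d2 d3 \<noteq> {}"
proof -
  have sum_zero: "e2 + e3 + e1 = 0" "e3 + e1 + e2 = 0" using assms(4) by linarith+
  consider "d1 > 0" "d2 > 0" "d3 > 0" | "d1 > 0" "d2 < 0" "d3 < 0"
    | "d2 > 0" "d3 < 0" "d1 < 0" | "d3 > 0" "d1 < 0" "d2 < 0"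
    using assms(6) by (auto simp: zero_less_mult_iff mult_less_0_iff)
  then show ?thesis
  proof cases
    case 1
    then show ?thesis using D_real_points_nonempty_if_all_pos[OF assms(4)] by blast
  next
    case 2
    then show ?thesis using D_real_points_nonempty_if_only_d1_pos[OF assms(1-5)] assms(7) by blast
  next
    case 3
    then have "D_real_points e2 e3 e1 n d2 d3 d1 \<noteq> {}"
      using D_real_points_nonempty_if_only_d1_pos[OF assms(2,3,1) sum_zero(1) assms(5)] assms(7)
      by blast
    then show ?thesis using D_real_points_nonempty_rotate by blast
  next
    case 4
    then have "D_real_points e3 e1 e2 n d3 d1 d2 \<noteq> {}"
      using D_real_points_nonempty_if_only_d1_pos[OF assms(3,1,2) sum_zero(2) assms(5)] assms(7)
      by blast
    then show ?thesis using D_real_points_nonempty_rotate by blast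
  qed
qed

theorem lemma2p4:
  fixes e1 e2 e3 n d1 d2 d3 :: int
  assumes "e1 \<noteq> 0" "e2 \<noteq> 0" "e3 \<noteq> 0" "e1 + e2 + e3 = 0"
    and "n > 0"
    and "d1 \<noteq> 0" "d2 \<noteq> 0" "d3 \<noteq> 0"
    and "squarefree d1" "squarefree d2" "squarefree d3"
    and "\<exists>k::int. d1 * d2 * d3 = k^2"
  shows "D_real_points e1 e2 e3 n d1 d2 d3 \<noteq> {} \<longleftrightarrow>
           ((e2 > 0 \<and> e3 < 0 \<longrightarrow> d1 > 0) \<and>
            (e3 > 0 \<and> e1 < 0 \<longrightarrow> d2 > 0) \<and>
            (e1 > 0 \<and> e2 < 0 \<longrightarrow> d3 > 0))"
proof -
  have "d1 * d2 * d3 > 0"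
    using assms(6-8,12) by (auto simp: less_le)
  then show ?thesis
    using assms(1-5) sign_conditions_if_D_real_points_nonempty
      D_real_points_nonempty_if_sign_conditions by blast
qed

end
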